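(* Let $n\geq 1$ be an integer and let $U$ be any $2^n\times 2^n$ unitary matrix, acting on $n$ qubits. Let $\rho$ be the $(n+1)$-qubit density matrix $$\rho=\frac{1}{2^{n+1}}\begin{pmatrix}\mathbb{1} & U^\dagger\\ U & \mathbb{1}\end{pmatrix},$$ written in block form with respect to the computational basis of the first ("clean") qubit. For every $y\in\{0,1\}^n$, the multiplicative negativity $M_y$ of $\rho$ with respect to the bipartition $y$ satisfies $$M_y\leq \frac{5}{4}.$$
   Context: The state $\rho$ lives on one clean qubit tensored with $n$ further qubits, and $\mathbb{1}$ denotes the $2^n\times 2^n$ identity. For $y\in\{0,1\}^n$, let $\rho_y$ denote the partial transpose of $\rho$ taken over those non-clean qubits $i$ with $y_i=1$ (the clean qubit is never transposed); equivalently, if $U_y$ denotes the partial transpose of $U$ over the qubits $i$ with $y_i=1$, then $\rho_y=\frac{1}{2^{n+1}}\begin{pmatrix}\mathbb{1} & U_y^\dagger\\ U_y & \mathbb{1}\end{pmatrix}$. The multiplicative negativity for bipartition $y$ is $M_y=\sum_{\lambda\in\mathrm{spec}(\rho_y)}|\lambda|$, the sum of the absolute values of the eigenvalues of $\rho_y$ (counted with multiplicity). *)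

theory Defs
  imports "Jordan_Normal_Form.Schur_Decomposition" "Jordan_Normal_Form.Char_Poly"
begin

definition unitary_mat :: "nat \<Rightarrow> complex mat \<Rightarrow> bool" where
  "unitary_mat N U \<longleftrightarrow> U \<in> carrier_mat N N \<and> U * mat_adjoint U = 1\<^sub>m N \<and> mat_adjoint U * U = 1\<^sub>m N"

(* the one-clean-qubit state: 1/2^(n+1) [[1, U^dagger],[U, 1]] ; the clean qubit
   is the most significant bit (bit n) of a row/column index in {0..<2^(n+1)},
   the n further qubits are bits 0..n-1 *)
definition clean_state :: "nat \<Rightarrow> complex mat \<Rightarrow> complex mat" where
  "clean_state n U = (1 / 2 ^ (n + 1)) \<cdot>\<^sub>m
     four_block_mat (1\<^sub>m (2 ^ n)) (mat_adjoint U) U (1\<^sub>m (2 ^ n))"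

definition mix_index :: "nat \<Rightarrow> nat set \<Rightarrow> nat \<Rightarrow> nat \<Rightarrow> nat" where
  "mix_index m S a b = (\<Sum>k<m. (if k \<in> S then b div 2 ^ k mod 2 else a div 2 ^ k mod 2) * 2 ^ k)"

definition partial_transpose :: "nat \<Rightarrow> nat set \<Rightarrow> complex mat \<Rightarrow> complex mat" where
  "partial_transpose m S A = mat (2 ^ m) (2 ^ m)
     (\<lambda>(a, b). A $$ (mix_index m S a b, mix_index m S b a))"

definition multiplicative_negativity :: "complex mat \<Rightarrow> real" where
  "multiplicative_negativity A = sum_mset (image_mset cmod (proots (char_poly A)))"

end

theory Submission
  imports Defs "Jordan_Normal_Form.Jordan_Normal_Form_Uniqueness"
begin

text \<open>
  Let \<open>c = 1 / 2 ^ (n + 1)\<close> and \<open>N = 2 ^ (n + 1)\<close>. Since the clean qubit is never transposed,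
  \<open>\<rho>_y\<close> is a Hermitian matrix whose two diagonal blocks are \<open>c \<cdot> 1\<close>, and
  \<open>tr (\<rho>_y\<^sup>2) = tr (\<rho>\<^sup>2) = 2c\<close>: partial transposition permutes the products \<open>\<rho>(a,b) \<rho>(b,a)\<close>.
  Conjugation by \<open>diag(1, -1)\<close> sends \<open>\<rho>_y\<close> to \<open>2c - \<rho>_y\<close>, so the real spectrum \<open>t\<^sub>1, ..., t\<^sub>N\<close>
  of \<open>\<rho>_y\<close>, which has \<open>\<Sum> t\<^sub>i = Nc = 1\<close>, is invariant under \<open>t \<mapsto> 2c - t\<close>. Since
  \<open>|t| + |2c - t| = 2 max c |t - c| \<le> 2c + (t - c)\<^sup>2 / (2c)\<close>, summing over the spectrum gives
  \<open>M_y \<le> Nc + \<Sum> (t\<^sub>i - c)\<^sup>2 / (4c) = 1 + (2c - Nc\<^sup>2) / (4c) = 5/4\<close>.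
\<close>

section \<open>Binary indices\<close>

lemma mix_index_Suc:
  "mix_index (Suc m) S a b
     = mix_index m S a b + (if m \<in> S then b div 2 ^ m mod 2 else a div 2 ^ m mod 2) * 2 ^ m"
  unfolding mix_index_def by simp

lemma mix_index_less: "mix_index m S a b < 2 ^ m"
proof (induction m)
  case (Suc m)
  define d where "d = (if m \<in> S then b div 2 ^ m mod 2 else a div 2 ^ m mod 2)"
  have "d \<le> 1"
    unfolding d_def by auto
  then have "d * 2 ^ m \<le> 2 ^ m"
    by simp
  with Suc.IH have "mix_index m S a b + d * 2 ^ m < 2 ^ m + 2 ^ m"
    by linarith
  then show ?case
    unfolding mix_index_Suc d_def[symmetric] by simp
qed (simp add: mix_index_def)

lemma nat_eq_if_digits_eq:
  fixes a b :: nat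
  assumes "a < 2 ^ m" "b < 2 ^ m" and "\<And>j. j < m \<Longrightarrow> a div 2 ^ j mod 2 = b div 2 ^ j mod 2"
  shows "a = b"
proof (rule bit_eqI)
  fix j
  show "bit a j \<longleftrightarrow> bit b j"
  proof (cases "j < m")
    case True
    then show ?thesis using assms(3) by (simp add: bit_iff_odd odd_iff_mod_2_eq_one)
  next
    case False
    then have "(2::nat) ^ m \<le> 2 ^ j" by simp
    then have "a div 2 ^ j = 0" "b div 2 ^ j = 0"
      using assms(1,2) by (simp_all add: div_less less_le_trans)
    then show ?thesis by (simp add: bit_iff_odd)
  qed
qed

lemma digit_add_high:
  fixes x d :: nat
  assumes "x < 2 ^ m" "d < 2" "j \<le> m"
  shows "(x + d * 2 ^ m) div 2 ^ j mod 2 = (if j = m then d else x div 2 ^ j mod 2)"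
proof (cases "j = m")
  case True
  with assms show ?thesis by simp
next
  case False
  with assms(3) have "j < m" by simp
  then obtain k where "m = j + Suc k" using less_iff_Suc_add by auto
  then have "x + d * 2 ^ m = x + 2 * (d * 2 ^ k) * 2 ^ j"
    by (simp add: power_add ac_simps)
  then have "(x + d * 2 ^ m) div 2 ^ j = x div 2 ^ j + 2 * (d * 2 ^ k)"
    using div_mult_self1[of "2 ^ j" x "2 * (d * 2 ^ k)"] by (simp only:) simp
  with False show ?thesis by simp
qed

lemma mix_index_digit:
  "j < m \<Longrightarrow> mix_index m S a b div 2 ^ j mod 2
     = (if j \<in> S then b div 2 ^ j mod 2 else a div 2 ^ j mod 2)"
proof (induction m)
  case (Suc m)
  have "(if m \<in> S then b div 2 ^ m mod 2 else a div 2 ^ m mod 2) < 2"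
    by simp
  from digit_add_high[OF mix_index_less[of m S a b] this, of j] Suc show ?case
    unfolding mix_index_Suc by (auto simp: less_Suc_eq)
qed simp

lemma mix_index_swap: "a < 2 ^ m \<Longrightarrow> mix_index m S (mix_index m S a b) (mix_index m S b a) = a"
  by (rule nat_eq_if_digits_eq[OF mix_index_less]) (simp_all add: mix_index_digit)

lemma mix_index_eq_swap_iff:
  assumes "a < 2 ^ m" "b < 2 ^ m"
  shows "mix_index m S a b = mix_index m S b a \<longleftrightarrow> a = b"
  using mix_index_swap[OF assms(1), of S b] mix_index_swap[OF assms(2), of S a] by auto

lemma mix_index_Suc_not_in:
  assumes "m \<notin> S" "a < 2 ^ Suc m"
  shows "mix_index (Suc m) S a b = mix_index m S a b + (if a < 2 ^ m then 0 else 2 ^ m)"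
proof -
  have "a div 2 ^ m < 2"
    using assms(2) by (simp add: div_less_iff_less_mult)
  then have "a div 2 ^ m mod 2 = (if a < 2 ^ m then 0 else 1)"
    by (cases "a div 2 ^ m") (auto simp: div_eq_0_iff)
  with assms(1) show ?thesis
    unfolding mix_index_Suc by simp
qed

section \<open>Traces and spectra\<close>

definition mat_trace :: "'a::comm_ring_1 mat \<Rightarrow> 'a" where
  "mat_trace A = (\<Sum>i<dim_row A. A $$ (i, i))"

lemma mat_trace_mult_comm:
  assumes "X \<in> carrier_mat n m" "Y \<in> carrier_mat m n"
  shows "mat_trace (X * Y) = mat_trace (Y * X)"
proof -
  have "mat_trace (X * Y) = (\<Sum>i<n. \<Sum>k<m. X $$ (i, k) * Y $$ (k, i))"
    using assms by (auto simp: mat_trace_def scalar_prod_def atLeast0LessThan)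
  also have "\<dots> = (\<Sum>k<m. \<Sum>i<n. Y $$ (k, i) * X $$ (i, k))"
    by (subst sum.swap) (simp add: mult.commute)
  also have "\<dots> = mat_trace (Y * X)"
    using assms by (auto simp: mat_trace_def scalar_prod_def atLeast0LessThan)
  finally show ?thesis .
qed

lemma mat_trace_similar_mat_wit:
  assumes "similar_mat_wit A B P Q" "A \<in> carrier_mat n n"
  shows "mat_trace A = mat_trace B"
proof -
  note wit = similar_mat_witD2[OF assms(2,1)]
  have "mat_trace A = mat_trace (Q * (P * B))"
    unfolding wit(3) by (rule mat_trace_mult_comm) (use wit in auto)
  also have "Q * (P * B) = B"
    using wit by (simp add: assoc_mult_mat[symmetric, of Q n n P n B n])
  finally show ?thesis .
qed

lemma mat_trace_square:
  "X \<in> carrier_mat n n \<Longrightarrow> mat_trace (X * X) = (\<Sum>i<n. \<Sum>k<n. X $$ (i, k) * X $$ (k, i))"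
  by (auto simp: mat_trace_def scalar_prod_def atLeast0LessThan)

lemma mat_trace_smult: "A \<in> carrier_mat n n \<Longrightarrow> mat_trace (k \<cdot>\<^sub>m A) = k * mat_trace A"
  unfolding mat_trace_def sum_distrib_left by (intro sum.cong) auto

lemma mat_trace_eq_sum_diag_mat:
  assumes "B \<in> carrier_mat n n"
  shows "mat_trace B = sum_list (diag_mat B)"
  using assms by (simp add: mat_trace_def diag_mat_def sum_list_sum_nth atLeast0LessThan)

lemma diag_mat_square_upper_triangular:
  fixes B :: "'a::comm_ring_1 mat"
  assumes B: "B \<in> carrier_mat n n" "upper_triangular B"
  shows "diag_mat (B * B) = map (\<lambda>e. e ^ 2) (diag_mat B)"
proof (rule nth_equalityI)
  fix i assume "i < length (diag_mat (B * B))"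
  then have i: "i < n" using B by (simp add: diag_mat_def)
  have "(B * B) $$ (i, i) = (\<Sum>k<n. B $$ (i, k) * B $$ (k, i))"
    using B i by (auto simp: scalar_prod_def atLeast0LessThan)
  also have "\<dots> = (\<Sum>k<n. if k = i then B $$ (i, i) * B $$ (i, i) else 0)"
    using B i by (intro sum.cong refl) (auto simp: upper_triangular_def neq_iff)
  also have "\<dots> = B $$ (i, i) ^ 2"
    using i by (simp add: power2_eq_square)
  finally show "diag_mat (B * B) ! i = map (\<lambda>e. e ^ 2) (diag_mat B) ! i"
    using B i by (simp add: diag_mat_def)
qed (use B in \<open>simp add: diag_mat_def\<close>)

lemma proots_prod_linear_factors:
  "proots (\<Prod>e\<leftarrow>es. [:- e, 1:]) = mset (es :: 'a::idom list)"
proof (induction es)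
  case (Cons e es)
  have "(\<Prod>e\<leftarrow>es. [:- e, 1:]) \<noteq> 0"
    by (auto simp: prod_list_zero_iff)
  with Cons.IH show ?case
    by (simp add: proots_mult del: mult_pCons_left)
qed simp

lemma mat_trace_eq_sum_eigenvalues:
  fixes A :: "'a::conjugatable_ordered_field mat"
  assumes A: "A \<in> carrier_mat n n" and cp: "char_poly A = (\<Prod>e\<leftarrow>es. [:- e, 1:])"
  shows "mat_trace A = sum_list es" and "mat_trace (A * A) = (\<Sum>e\<leftarrow>es. e ^ 2)"
proof -
  obtain B P Q where "schur_decomposition A es = (B, P, Q)"
    by (cases "schur_decomposition A es") auto
  from schur_decomposition[OF A cp this]
  have sim: "similar_mat_wit A B P Q" and ut: "upper_triangular B" and diag: "diag_mat B = es"
    by auto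
  have B: "B \<in> carrier_mat n n"
    using similar_mat_witD2[OF A sim] by simp
  show "mat_trace A = sum_list es"
    using mat_trace_similar_mat_wit[OF sim A] mat_trace_eq_sum_diag_mat[OF B] diag by simp
  have "similar_mat_wit (A ^\<^sub>m 2) (B ^\<^sub>m 2) P Q"
    by (rule similar_mat_wit_pow[OF sim])
  moreover have "X ^\<^sub>m 2 = X * X" if "X \<in> carrier_mat n n" for X :: "'a mat"
    using that by (simp add: numeral_2_eq_2)
  ultimately have "similar_mat_wit (A * A) (B * B) P Q"
    using A B by simp
  then have "mat_trace (A * A) = mat_trace (B * B)"
    using A by (intro mat_trace_similar_mat_wit) auto
  also have "\<dots> = (\<Sum>e\<leftarrow>es. e ^ 2)"
    using mat_trace_eq_sum_diag_mat[of "B * B" n] B ut diag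
    by (simp add: diag_mat_square_upper_triangular)
  finally show "mat_trace (A * A) = (\<Sum>e\<leftarrow>es. e ^ 2)" .
qed

lemma char_poly_reflect:
  fixes A :: "'a::conjugatable_ordered_field mat"
  assumes A: "A \<in> carrier_mat n n" and cp: "char_poly A = (\<Prod>e\<leftarrow>es. [:- e, 1:])"
  shows "char_poly (d \<cdot>\<^sub>m 1\<^sub>m n - A) = (\<Prod>e\<leftarrow>map (\<lambda>e. d - e) es. [:- e, 1:])"
proof -
  obtain B P Q where "schur_decomposition A es = (B, P, Q)"
    by (cases "schur_decomposition A es") auto
  from schur_decomposition[OF A cp this]
  have sim: "similar_mat_wit A B P Q" and ut: "upper_triangular B" and diag: "diag_mat B = es"
    by auto
  have B: "B \<in> carrier_mat n n"
    using similar_mat_witD2[OF A sim] by simp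
  have reflect: "d \<cdot>\<^sub>m 1\<^sub>m n - X = (- 1) \<cdot>\<^sub>m char_matrix X d" if "X \<in> carrier_mat n n" for X
    using that by (intro eq_matI) (auto simp: char_matrix_def)
  have "similar_mat_wit (d \<cdot>\<^sub>m 1\<^sub>m n - A) (d \<cdot>\<^sub>m 1\<^sub>m n - B) P Q"
    unfolding reflect[OF A] reflect[OF B]
    by (intro similar_mat_wit_smult similar_mat_wit_char_matrix sim)
  then have "char_poly (d \<cdot>\<^sub>m 1\<^sub>m n - A) = char_poly (d \<cdot>\<^sub>m 1\<^sub>m n - B)"
    by (intro char_poly_similar) (auto simp: similar_mat_def)
  also have "\<dots> = (\<Prod>e\<leftarrow>diag_mat (d \<cdot>\<^sub>m 1\<^sub>m n - B). [:- e, 1:])"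
    by (rule char_poly_upper_triangular) (use B ut in \<open>auto simp: upper_triangular_def\<close>)
  also have "diag_mat (d \<cdot>\<^sub>m 1\<^sub>m n - B) = map (\<lambda>e. d - e) es"
    using B by (auto simp: diag[symmetric] diag_mat_def)
  finally show ?thesis .
qed

lemma eigenvalues_reflection_invariant:
  fixes A :: "'a::conjugatable_ordered_field mat"
  assumes "A \<in> carrier_mat n n" and "char_poly A = (\<Prod>e\<leftarrow>es. [:- e, 1:])"
    and "similar_mat A (d \<cdot>\<^sub>m 1\<^sub>m n - A)"
  shows "mset (map (\<lambda>e. d - e) es) = mset es"
proof -
  have "(\<Prod>e\<leftarrow>map (\<lambda>e. d - e) es. [:- e, 1:]) = (\<Prod>e\<leftarrow>es. [:- e, 1:])"
    using char_poly_similar[OF assms(3)] char_poly_reflect[OF assms(1,2)] assms(2) by simp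
  then show ?thesis
    by (metis proots_prod_linear_factors)
qed

lemma similar_mat_block_reflection:
  fixes B C :: "'a::comm_ring_1 mat" and c :: 'a
  assumes B: "B \<in> carrier_mat k l" and C: "C \<in> carrier_mat l k"
  defines "A \<equiv> four_block_mat (c \<cdot>\<^sub>m 1\<^sub>m k) B C (c \<cdot>\<^sub>m 1\<^sub>m l)"
  shows "similar_mat A ((2 * c) \<cdot>\<^sub>m 1\<^sub>m (k + l) - A)"
proof -
  define J :: "'a mat" where "J = four_block_mat (1\<^sub>m k) (0\<^sub>m k l) (0\<^sub>m l k) (- 1\<^sub>m l)"
  have J: "J \<in> carrier_mat (k + l) (k + l)"
    unfolding J_def by auto
  have JJ: "J * J = 1\<^sub>m (k + l)"
    unfolding J_def by (subst mult_four_block_mat) (auto intro!: eq_matI)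
  have reflected: "(2 * c) \<cdot>\<^sub>m 1\<^sub>m (k + l) - A
      = four_block_mat (c \<cdot>\<^sub>m 1\<^sub>m k) (- B) (- C) (c \<cdot>\<^sub>m 1\<^sub>m l)"
    unfolding A_def using B C by (intro eq_matI) auto
  have "J * ((2 * c) \<cdot>\<^sub>m 1\<^sub>m (k + l) - A) * J = A"
    unfolding reflected unfolding A_def J_def using B C
    by (subst mult_four_block_mat, auto)+
  then show ?thesis
    using B C J JJ unfolding A_def by (intro similar_matI[of _ _ J J "k + l"]) auto
qed

section \<open>Hermitian matrices\<close>

definition hermitian_mat :: "complex mat \<Rightarrow> bool" where
  "hermitian_mat A \<longleftrightarrow> mat_adjoint A = A"

lemma index_mat_adjoint:
  "i < dim_col A \<Longrightarrow> j < dim_row A \<Longrightarrow> mat_adjoint A $$ (i, j) = cnj (A $$ (j, i))"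
  unfolding mat_adjoint_def by (auto simp: mat_of_rows_def)

lemma mat_adjoint_carrier: "A \<in> carrier_mat n m \<Longrightarrow> mat_adjoint A \<in> carrier_mat m n"
  unfolding mat_adjoint_def by (auto simp: mat_of_rows_def)

lemma hermitian_mat_iff:
  assumes A: "A \<in> carrier_mat n n"
  shows "hermitian_mat A \<longleftrightarrow> (\<forall>i<n. \<forall>j<n. A $$ (i, j) = cnj (A $$ (j, i)))"
proof (intro iffI allI impI)
  fix i j assume "hermitian_mat A" "i < n" "j < n"
  then have "A $$ (i, j) = mat_adjoint A $$ (i, j)"
    unfolding hermitian_mat_def by simp
  also have "\<dots> = cnj (A $$ (j, i))"
    using A \<open>i < n\<close> \<open>j < n\<close> by (simp add: index_mat_adjoint)
  finally show "A $$ (i, j) = cnj (A $$ (j, i))" .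
next
  assume entries: "\<forall>i<n. \<forall>j<n. A $$ (i, j) = cnj (A $$ (j, i))"
  show "hermitian_mat A"
    unfolding hermitian_mat_def
  proof (rule eq_matI)
    fix i j assume "i < dim_row A" "j < dim_col A"
    with A have ij: "i < n" "j < n"
      by auto
    with A have "mat_adjoint A $$ (i, j) = cnj (A $$ (j, i))"
      by (simp add: index_mat_adjoint)
    also have "\<dots> = A $$ (i, j)"
      using entries ij by (metis complex_cnj_cnj)
    finally show "mat_adjoint A $$ (i, j) = A $$ (i, j)" .
  qed (use A mat_adjoint_carrier[OF A] in auto)
qed

lemma hermitian_quadratic_form_real:
  assumes A: "A \<in> carrier_mat n n" and "hermitian_mat A"
  shows "Im (\<Sum>i<n. \<Sum>j<n. cnj (v $ i) * A $$ (i, j) * v $ j) = 0"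
proof -
  define q where "q = (\<Sum>i<n. \<Sum>j<n. cnj (v $ i) * A $$ (i, j) * v $ j)"
  have herm: "cnj (A $$ (i, j)) = A $$ (j, i)" if "i < n" "j < n" for i j
    using assms(2) that A index_mat_adjoint[of j A i] unfolding hermitian_mat_def by simp
  have "cnj q = (\<Sum>i<n. \<Sum>j<n. cnj (v $ j) * A $$ (j, i) * v $ i)"
    unfolding q_def using herm by (simp add: mult.commute mult.left_commute)
  also have "\<dots> = q"
    unfolding q_def by (rule sum.swap)
  finally have "Im (cnj q) = Im q"
    by simp
  then show ?thesis
    unfolding q_def[symmetric] by simp
qed

lemma sum_cmod_square_pos:
  assumes "v \<in> carrier_vec n" "v \<noteq> 0\<^sub>v n"
  shows "(\<Sum>i<n. (cmod (v $ i))\<^sup>2) > 0"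
proof -
  have "\<exists>i<n. v $ i \<noteq> 0"
  proof (rule ccontr)
    assume "\<not> (\<exists>i<n. v $ i \<noteq> 0)"
    then have "v = 0\<^sub>v n"
      using assms(1) by (intro eq_vecI) auto
    with assms(2) show False ..
  qed
  then obtain i where "i < n" "v $ i \<noteq> 0"
    by blast
  then have "(cmod (v $ i))\<^sup>2 > 0" "(cmod (v $ i))\<^sup>2 \<le> (\<Sum>i<n. (cmod (v $ i))\<^sup>2)"
    by (simp, intro member_le_sum) auto
  then show ?thesis
    by linarith
qed

lemma hermitian_eigenvalue_real:
  assumes A: "A \<in> carrier_mat n n" and "hermitian_mat A" and "eigenvalue A k"
  shows "Im k = 0"
proof -
  obtain v where v: "v \<in> carrier_vec n" "v \<noteq> 0\<^sub>v n" "A *\<^sub>v v = k \<cdot>\<^sub>v v"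
    using assms(3) A unfolding eigenvalue_def eigenvector_def by auto
  have row: "(\<Sum>j<n. A $$ (i, j) * v $ j) = k * v $ i" if "i < n" for i
    using arg_cong[OF v(3), of "\<lambda>w. w $ i"] that A v(1)
    by (simp add: scalar_prod_def atLeast0LessThan)
  have "(\<Sum>i<n. \<Sum>j<n. cnj (v $ i) * A $$ (i, j) * v $ j)
      = (\<Sum>i<n. cnj (v $ i) * (\<Sum>j<n. A $$ (i, j) * v $ j))"
    by (simp add: sum_distrib_left mult.assoc)
  also have "\<dots> = k * (\<Sum>i<n. cnj (v $ i) * v $ i)"
    using row by (simp add: sum_distrib_left mult.left_commute)
  also have "(\<Sum>i<n. cnj (v $ i) * v $ i) = of_real (\<Sum>i<n. (cmod (v $ i))\<^sup>2)"
    unfolding of_real_sum by (intro sum.cong refl) (subst complex_norm_square, rule mult.commute)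
  finally have "Im k * (\<Sum>i<n. (cmod (v $ i))\<^sup>2) = 0"
    using hermitian_quadratic_form_real[OF A assms(2), of v] by simp
  with sum_cmod_square_pos[OF v(1,2)] show ?thesis
    by simp
qed

section \<open>Negativity of matrices with scalar diagonal blocks\<close>

lemma sum_abs_le_of_reflection_invariant:
  fixes ts :: "real list" and c :: real
  assumes c: "c > 0" and invariant: "mset (map (\<lambda>t. 2 * c - t) ts) = mset ts"
  shows "(\<Sum>t\<leftarrow>ts. \<bar>t\<bar>) \<le> length ts * c + (\<Sum>t\<leftarrow>ts. (t - c)\<^sup>2) / (4 * c)"
proof -
  \<comment> \<open>\<open>max c x \<le> c + x\<^sup>2 / (4c)\<close> by AM-GM\<close>
  have pointwise: "\<bar>t\<bar> + \<bar>2 * c - t\<bar> \<le> 2 * c + (t - c)\<^sup>2 / (2 * c)" for t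
  proof -
    have "4 * c * \<bar>t - c\<bar> \<le> 4 * c * c + (t - c)\<^sup>2"
      using sum_squares_ge_zero[of "\<bar>t - c\<bar> - 2 * c" 0]
      by (simp add: power2_eq_square algebra_simps)
    then have "2 * \<bar>t - c\<bar> \<le> 2 * c + (t - c)\<^sup>2 / (2 * c)"
      using c by (simp add: field_simps)
    moreover have "\<bar>t\<bar> + \<bar>2 * c - t\<bar> = 2 * max c \<bar>t - c\<bar>"
      using c by (simp add: max_def abs_if)
    moreover have "0 \<le> (t - c)\<^sup>2 / (2 * c)"
      using c by simp
    ultimately show ?thesis
      by (simp add: max_def)
  qed
  have "(\<Sum>t\<leftarrow>ts. \<bar>2 * c - t\<bar>) = (\<Sum>t\<leftarrow>ts. \<bar>t\<bar>)"
    using arg_cong[OF invariant, of "\<lambda>M. sum_mset (image_mset abs M)"]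
    by (simp add: sum_mset_sum_list[symmetric] multiset.map_comp comp_def)
  then have "2 * (\<Sum>t\<leftarrow>ts. \<bar>t\<bar>) = (\<Sum>t\<leftarrow>ts. \<bar>t\<bar> + \<bar>2 * c - t\<bar>)"
    by (simp add: sum_list_addf)
  also have "\<dots> \<le> (\<Sum>t\<leftarrow>ts. 2 * c + (t - c)\<^sup>2 / (2 * c))"
    by (rule sum_list_mono) (rule pointwise)
  also have "\<dots> = 2 * (length ts * c + (\<Sum>t\<leftarrow>ts. (t - c)\<^sup>2) / (4 * c))"
    using c by (induction ts) (simp_all add: add_divide_distrib algebra_simps)
  finally show ?thesis by simp
qed

lemma hermitian_eigenvalues_real:
  assumes A: "A \<in> carrier_mat n n" and herm: "hermitian_mat A"
    and cp: "char_poly A = (\<Prod>e\<leftarrow>es. [:- e, 1:])"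
  shows "map (\<lambda>e. of_real (Re e)) es = es"
proof (rule map_idI)
  fix e assume "e \<in> set es"
  then have "poly (char_poly A) e = 0"
    unfolding cp by (auto simp: poly_prod_list prod_list_zero_iff)
  then have "eigenvalue A e"
    using eigenvalue_root_char_poly[OF A] by simp
  then show "of_real (Re e) = e"
    using hermitian_eigenvalue_real[OF A herm] by (simp add: complex_eq_iff)
qed

lemma sum_list_square_deviation:
  fixes ts :: "real list" and c :: real
  shows "(\<Sum>t\<leftarrow>ts. (t - c)\<^sup>2) = (\<Sum>t\<leftarrow>ts. t\<^sup>2) - 2 * c * sum_list ts + length ts * c\<^sup>2"
  by (induction ts) (simp_all add: power2_diff algebra_simps)

lemma multiplicative_negativity_block_bound:
  fixes B C :: "complex mat" and c :: real
  assumes B: "B \<in> carrier_mat k l" and C: "C \<in> carrier_mat l k" and c: "c > 0"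
    and A: "A = four_block_mat (of_real c \<cdot>\<^sub>m 1\<^sub>m k) B C (of_real c \<cdot>\<^sub>m 1\<^sub>m l)"
    and herm: "hermitian_mat A"
  shows "multiplicative_negativity A
    \<le> (k + l) * c + (Re (mat_trace (A * A)) - (k + l) * c\<^sup>2) / (4 * c)"
proof -
  have Ac: "A \<in> carrier_mat (k + l) (k + l)"
    using A B C by simp
  obtain es where cp: "char_poly A = (\<Prod>e\<leftarrow>es. [:- e, 1:])" and len: "length es = k + l"
    using char_poly_factorized[OF Ac] by blast
  define ts where "ts = map Re es"
  have es: "es = map of_real ts"
    using hermitian_eigenvalues_real[OF Ac herm cp] unfolding ts_def by (simp add: comp_def)
  have of_real_sum_list: "(\<Sum>t\<leftarrow>ts. of_real (f t)) = (of_real (\<Sum>t\<leftarrow>ts. f t) :: complex)" for f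
    by (induction ts) auto
  have negativity: "multiplicative_negativity A = (\<Sum>t\<leftarrow>ts. \<bar>t\<bar>)"
    unfolding multiplicative_negativity_def cp proots_prod_linear_factors es
    by (simp add: sum_mset_sum_list[symmetric] multiset.map_comp comp_def)
  have "similar_mat A ((2 * of_real c) \<cdot>\<^sub>m 1\<^sub>m (k + l) - A)"
    unfolding A by (rule similar_mat_block_reflection[OF B C])
  from arg_cong[OF eigenvalues_reflection_invariant[OF Ac cp this], of "image_mset Re"]
  have reflection_invariant: "mset (map (\<lambda>t. 2 * c - t) ts) = mset ts"
    unfolding ts_def by (simp add: multiset.map_comp comp_def)
  have "of_real (sum_list ts) = mat_trace A"
    using mat_trace_eq_sum_eigenvalues(1)[OF Ac cp] of_real_sum_list[of "\<lambda>t. t"] es by simp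
  also have "mat_trace A = (\<Sum>i<k + l. of_real c)"
    unfolding mat_trace_def using Ac unfolding A using B C by (intro sum.cong) auto
  also have "\<dots> = of_real ((k + l) * c)"
    by simp
  finally have "sum_list ts = (k + l) * c"
    by (simp only: of_real_eq_iff)
  moreover have "(\<Sum>t\<leftarrow>ts. t\<^sup>2) = Re (mat_trace (A * A))"
    using mat_trace_eq_sum_eigenvalues(2)[OF Ac cp] of_real_sum_list[of "\<lambda>t. t\<^sup>2"] es
    by (simp add: comp_def)
  moreover have "length ts = k + l"
    using len unfolding ts_def by simp
  ultimately have variance: "(\<Sum>t\<leftarrow>ts. (t - c)\<^sup>2) = Re (mat_trace (A * A)) - (k + l) * c\<^sup>2"
    using sum_list_square_deviation[of c ts] by (simp add: power2_eq_square algebra_simps)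
  show ?thesis
    using sum_abs_le_of_reflection_invariant[OF c reflection_invariant] \<open>length ts = k + l\<close>
    unfolding negativity variance by simp
qed

section \<open>Partial transposes\<close>

lemma partial_transpose_carrier: "partial_transpose m S X \<in> carrier_mat (2 ^ m) (2 ^ m)"
  unfolding partial_transpose_def by simp

lemma index_partial_transpose:
  "a < 2 ^ m \<Longrightarrow> b < 2 ^ m \<Longrightarrow>
    partial_transpose m S X $$ (a, b) = X $$ (mix_index m S a b, mix_index m S b a)"
  unfolding partial_transpose_def by simp

lemma hermitian_partial_transpose:
  assumes X: "X \<in> carrier_mat (2 ^ m) (2 ^ m)" and "hermitian_mat X"
  shows "hermitian_mat (partial_transpose m S X)"
proof -
  have X_entries: "X $$ (p, q) = cnj (X $$ (q, p))" if "p < 2 ^ m" "q < 2 ^ m" for p q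
    using assms(2) that unfolding hermitian_mat_iff[OF X] by blast
  show ?thesis
    unfolding hermitian_mat_iff[OF partial_transpose_carrier]
  proof (intro allI impI)
    fix a b :: nat assume ab: "a < 2 ^ m" "b < 2 ^ m"
    show "partial_transpose m S X $$ (a, b) = cnj (partial_transpose m S X $$ (b, a))"
      unfolding index_partial_transpose[OF ab] index_partial_transpose[OF ab(2,1)]
      by (rule X_entries) (rule mix_index_less)+
  qed
qed

lemma mat_trace_square_partial_transpose:
  assumes X: "X \<in> carrier_mat (2 ^ m) (2 ^ m)"
  shows "mat_trace (partial_transpose m S X * partial_transpose m S X) = mat_trace (X * X)"
proof -
  let ?I = "{..<2 ^ m :: nat}"
  define g where "g = (\<lambda>(p, q). X $$ (p, q) * X $$ (q, p))"
  define \<sigma> where "\<sigma> = (\<lambda>(a, b). (mix_index m S a b, mix_index m S b a))"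
  have \<sigma>: "\<sigma> (\<sigma> x) = x" "\<sigma> x \<in> ?I \<times> ?I" if "x \<in> ?I \<times> ?I" for x
    using that mix_index_swap[of _ m S] mix_index_less[of m S] by (auto simp: \<sigma>_def split: prod.splits)
  have "mat_trace (partial_transpose m S X * partial_transpose m S X) = (\<Sum>x\<in>?I \<times> ?I. g (\<sigma> x))"
    by (simp add: mat_trace_square[OF partial_transpose_carrier] sum.cartesian_product
        index_partial_transpose g_def \<sigma>_def split_def)
  also have "\<dots> = (\<Sum>x\<in>?I \<times> ?I. g x)"
    by (rule sum.reindex_bij_witness[of _ \<sigma> \<sigma>]) (use \<sigma> in auto)
  also have "\<dots> = mat_trace (X * X)"
    by (simp add: mat_trace_square[OF X] sum.cartesian_product g_def)
  finally show ?thesis .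
qed

lemma index_partial_transpose_diagonal_block:
  fixes Y Z :: "complex mat"
  assumes "m \<notin> S" and Y: "Y \<in> carrier_mat (2 ^ m) (2 ^ m)" and Z: "Z \<in> carrier_mat (2 ^ m) (2 ^ m)"
    and ab: "a < 2 ^ Suc m" "b < 2 ^ Suc m" "a < 2 ^ m \<longleftrightarrow> b < 2 ^ m"
  shows "partial_transpose (Suc m) S (four_block_mat (c \<cdot>\<^sub>m 1\<^sub>m (2 ^ m)) Y Z (c \<cdot>\<^sub>m 1\<^sub>m (2 ^ m))) $$ (a, b)
    = (if a = b then c else 0)"
proof -
  define p q where "p = mix_index (Suc m) S a b" and "q = mix_index (Suc m) S b a"
  have "p = mix_index m S a b + (if a < 2 ^ m then 0 else 2 ^ m)"
    "q = mix_index m S b a + (if b < 2 ^ m then 0 else 2 ^ m)"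
    unfolding p_def q_def by (rule mix_index_Suc_not_in[OF \<open>m \<notin> S\<close> ab(1)],
      rule mix_index_Suc_not_in[OF \<open>m \<notin> S\<close> ab(2)])
  then have pq: "p < 2 * 2 ^ m" "q < 2 * 2 ^ m" "p < 2 ^ m \<longleftrightarrow> q < 2 ^ m"
    using mix_index_less[of m S a b] mix_index_less[of m S b a] ab(3) by auto
  have "partial_transpose (Suc m) S (four_block_mat (c \<cdot>\<^sub>m 1\<^sub>m (2 ^ m)) Y Z (c \<cdot>\<^sub>m 1\<^sub>m (2 ^ m))) $$ (a, b)
    = four_block_mat (c \<cdot>\<^sub>m 1\<^sub>m (2 ^ m)) Y Z (c \<cdot>\<^sub>m 1\<^sub>m (2 ^ m)) $$ (p, q)"
    unfolding p_def q_def by (rule index_partial_transpose[OF ab(1,2)])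
  also have "\<dots> = (if p = q then c else 0)"
  proof (cases "p < 2 ^ m")
    case True
    with pq Y Z show ?thesis
      by simp
  next
    case False
    with pq Y Z have "p - 2 ^ m = q - 2 ^ m \<longleftrightarrow> p = q"
      by auto
    with False pq Y Z show ?thesis
      by (simp add: mult_2)
  qed
  also have "p = q \<longleftrightarrow> a = b"
    unfolding p_def q_def by (rule mix_index_eq_swap_iff[OF ab(1,2)])
  finally show ?thesis .
qed

lemma partial_transpose_scalar_diagonal_blocks:
  fixes Y Z :: "complex mat"
  assumes "m \<notin> S" and "Y \<in> carrier_mat (2 ^ m) (2 ^ m)" and "Z \<in> carrier_mat (2 ^ m) (2 ^ m)"
  obtains Y' Z' where "Y' \<in> carrier_mat (2 ^ m) (2 ^ m)" "Z' \<in> carrier_mat (2 ^ m) (2 ^ m)"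
    "partial_transpose (Suc m) S (four_block_mat (c \<cdot>\<^sub>m 1\<^sub>m (2 ^ m)) Y Z (c \<cdot>\<^sub>m 1\<^sub>m (2 ^ m)))
      = four_block_mat (c \<cdot>\<^sub>m 1\<^sub>m (2 ^ m)) Y' Z' (c \<cdot>\<^sub>m 1\<^sub>m (2 ^ m))"
proof -
  let ?P = "partial_transpose (Suc m) S (four_block_mat (c \<cdot>\<^sub>m 1\<^sub>m (2 ^ m)) Y Z (c \<cdot>\<^sub>m 1\<^sub>m (2 ^ m)))"
  obtain A1 A2 A3 A4 where split: "split_block ?P (2 ^ m) (2 ^ m) = (A1, A2, A3, A4)"
    by (cases "split_block ?P (2 ^ m) (2 ^ m)") auto
  have dims: "dim_row ?P = 2 ^ m + 2 ^ m" "dim_col ?P = 2 ^ m + 2 ^ m"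
    by (simp_all add: partial_transpose_def mult_2)
  note blocks = split_block[OF split dims]
  have P: "?P $$ (a, b) = (if a = b then c else 0)"
    if "a < 2 ^ Suc m" "b < 2 ^ Suc m" "a < 2 ^ m \<longleftrightarrow> b < 2 ^ m" for a b
    by (rule index_partial_transpose_diagonal_block[OF assms that])
  have "A1 = c \<cdot>\<^sub>m 1\<^sub>m (2 ^ m)"
  proof (rule eq_matI)
    fix i j assume "i < dim_row (c \<cdot>\<^sub>m 1\<^sub>m (2 ^ m))" "j < dim_col (c \<cdot>\<^sub>m 1\<^sub>m (2 ^ m))"
    then have ij: "i < 2 ^ m" "j < 2 ^ m"
      by auto
    with blocks have "A1 $$ (i, j) = ?P $$ (i, j)"
      by simp
    also have "\<dots> = (if i = j then c else 0)"
      using ij by (intro P) auto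
    finally show "A1 $$ (i, j) = (c \<cdot>\<^sub>m 1\<^sub>m (2 ^ m)) $$ (i, j)"
      using ij by simp
  qed (use blocks in auto)
  moreover have "A4 = c \<cdot>\<^sub>m 1\<^sub>m (2 ^ m)"
  proof (rule eq_matI)
    fix i j assume "i < dim_row (c \<cdot>\<^sub>m 1\<^sub>m (2 ^ m))" "j < dim_col (c \<cdot>\<^sub>m 1\<^sub>m (2 ^ m))"
    then have ij: "i < 2 ^ m" "j < 2 ^ m"
      by auto
    with blocks have "A4 $$ (i, j) = ?P $$ (i + 2 ^ m, j + 2 ^ m)"
      by simp
    also have "\<dots> = (if i = j then c else 0)"
      using ij by (subst P) auto
    finally show "A4 $$ (i, j) = (c \<cdot>\<^sub>m 1\<^sub>m (2 ^ m)) $$ (i, j)"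
      using ij by simp
  qed (use blocks in auto)
  ultimately show ?thesis
    using blocks that by blast
qed

section \<open>The one-clean-qubit state\<close>

lemma clean_state_four_block:
  "clean_state n U = four_block_mat ((1 / 2 ^ (n + 1)) \<cdot>\<^sub>m 1\<^sub>m (2 ^ n))
     ((1 / 2 ^ (n + 1)) \<cdot>\<^sub>m mat_adjoint U) ((1 / 2 ^ (n + 1)) \<cdot>\<^sub>m U) ((1 / 2 ^ (n + 1)) \<cdot>\<^sub>m 1\<^sub>m (2 ^ n))"
  if "U \<in> carrier_mat (2 ^ n) (2 ^ n)"
  unfolding clean_state_def
  by (rule smult_four_block_mat) (use that mat_adjoint_carrier[OF that] in auto)

lemma clean_state_carrier:
  "U \<in> carrier_mat (2 ^ n) (2 ^ n) \<Longrightarrow> clean_state n U \<in> carrier_mat (2 ^ Suc n) (2 ^ Suc n)"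
  unfolding clean_state_def power_Suc mult_2 using mat_adjoint_carrier[of U] by simp

lemma hermitian_clean_state:
  assumes U: "U \<in> carrier_mat (2 ^ n) (2 ^ n)"
  shows "hermitian_mat (clean_state n U)"
proof -
  have C: "clean_state n U \<in> carrier_mat (2 ^ n + 2 ^ n) (2 ^ n + 2 ^ n)"
    unfolding clean_state_def using U mat_adjoint_carrier[OF U] by simp
  show ?thesis
    unfolding hermitian_mat_iff[OF C]
    using U mat_adjoint_carrier[OF U] by (auto simp: clean_state_def index_mat_adjoint)
qed

lemma mat_trace_square_clean_state:
  assumes "unitary_mat (2 ^ n) U"
  shows "mat_trace (clean_state n U * clean_state n U) = 2 / 2 ^ (n + 1)"
proof -
  let ?N = "2 ^ n :: nat" and ?c = "1 / 2 ^ (n + 1) :: complex"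
  have U: "U \<in> carrier_mat ?N ?N" and UU: "mat_adjoint U * U = 1\<^sub>m ?N" "U * mat_adjoint U = 1\<^sub>m ?N"
    using assms unfolding unitary_mat_def by auto
  define F where "F = four_block_mat (1\<^sub>m ?N) (mat_adjoint U) U (1\<^sub>m ?N)"
  have F: "F \<in> carrier_mat (?N + ?N) (?N + ?N)"
    unfolding F_def using U mat_adjoint_carrier[OF U] by simp
  have "F * F = four_block_mat (1\<^sub>m ?N * 1\<^sub>m ?N + mat_adjoint U * U)
      (1\<^sub>m ?N * mat_adjoint U + mat_adjoint U * 1\<^sub>m ?N) (U * 1\<^sub>m ?N + 1\<^sub>m ?N * U)
      (U * mat_adjoint U + 1\<^sub>m ?N * 1\<^sub>m ?N)"
    unfolding F_def using U mat_adjoint_carrier[OF U] by (intro mult_four_block_mat) auto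
  then have "mat_trace (F * F) = (\<Sum>i<?N + ?N. 2)"
    unfolding mat_trace_def using U mat_adjoint_carrier[OF U] F UU
    by (intro sum.cong) auto
  moreover have "clean_state n U * clean_state n U = ?c \<cdot>\<^sub>m (F * (?c \<cdot>\<^sub>m F))"
    unfolding clean_state_def F_def[symmetric]
    by (rule mult_smult_assoc_mat[OF F smult_carrier_mat[OF F]])
  moreover have "F * (?c \<cdot>\<^sub>m F) = ?c \<cdot>\<^sub>m (F * F)"
    by (rule mult_smult_distrib[OF F F])
  ultimately show ?thesis
    using F by (simp add: mat_trace_smult[of _ "?N + ?N"] power_add)
qed

lemma partial_transpose_clean_state_blocks:
  assumes U: "U \<in> carrier_mat (2 ^ n) (2 ^ n)" and "n \<notin> S"
  obtains Y Z where "Y \<in> carrier_mat (2 ^ n) (2 ^ n)" "Z \<in> carrier_mat (2 ^ n) (2 ^ n)"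
    "partial_transpose (Suc n) S (clean_state n U)
      = four_block_mat (of_real (1 / 2 ^ (n + 1)) \<cdot>\<^sub>m 1\<^sub>m (2 ^ n)) Y Z (of_real (1 / 2 ^ (n + 1)) \<cdot>\<^sub>m 1\<^sub>m (2 ^ n))"
proof -
  have "(1 / 2 ^ (n + 1) :: complex) \<cdot>\<^sub>m mat_adjoint U \<in> carrier_mat (2 ^ n) (2 ^ n)"
    "(1 / 2 ^ (n + 1) :: complex) \<cdot>\<^sub>m U \<in> carrier_mat (2 ^ n) (2 ^ n)"
    using U mat_adjoint_carrier[OF U] by auto
  then obtain Y Z where YZ: "Y \<in> carrier_mat (2 ^ n) (2 ^ n)" "Z \<in> carrier_mat (2 ^ n) (2 ^ n)"
    and blocks: "partial_transpose (Suc n) S (clean_state n U)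
      = four_block_mat ((1 / 2 ^ (n + 1)) \<cdot>\<^sub>m 1\<^sub>m (2 ^ n)) Y Z ((1 / 2 ^ (n + 1)) \<cdot>\<^sub>m 1\<^sub>m (2 ^ n))"
    unfolding clean_state_four_block[OF U] by (rule partial_transpose_scalar_diagonal_blocks[OF \<open>n \<notin> S\<close>])
  show ?thesis
    by (rule that[OF YZ]) (simp add: blocks)
qed

theorem theorem1:
  fixes n :: nat and U :: "complex mat" and S :: "nat set"
  assumes "n \<ge> 1"
    and "unitary_mat (2 ^ n) U"
    and "S \<subseteq> {..<n}"
  shows "multiplicative_negativity (partial_transpose (n + 1) S (clean_state n U)) \<le> 5 / 4"
proof -
  define c :: real where "c = 1 / 2 ^ (n + 1)"
  let ?\<rho> = "partial_transpose (Suc n) S (clean_state n U)"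
  have U: "U \<in> carrier_mat (2 ^ n) (2 ^ n)"
    using assms(2) unfolding unitary_mat_def by blast
  have "n \<notin> S"
    using assms(3) by auto
  then obtain Y Z where YZ: "Y \<in> carrier_mat (2 ^ n) (2 ^ n)" "Z \<in> carrier_mat (2 ^ n) (2 ^ n)"
    and blocks: "?\<rho> = four_block_mat (of_real c \<cdot>\<^sub>m 1\<^sub>m (2 ^ n)) Y Z (of_real c \<cdot>\<^sub>m 1\<^sub>m (2 ^ n))"
    using partial_transpose_clean_state_blocks[OF U] unfolding c_def by blast
  have herm: "hermitian_mat ?\<rho>"
    using hermitian_partial_transpose[OF clean_state_carrier[OF U] hermitian_clean_state[OF U]] .
  have trace: "Re (mat_trace (?\<rho> * ?\<rho>)) = 2 * c"
    using mat_trace_square_partial_transpose[OF clean_state_carrier[OF U]]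
      mat_trace_square_clean_state[OF assms(2)]
    by (simp add: c_def)
  have "c > 0"
    by (simp add: c_def)
  from multiplicative_negativity_block_bound[OF YZ this blocks herm]
  have "multiplicative_negativity ?\<rho>
      \<le> (real (2 ^ n) + real (2 ^ n)) * c + (2 * c - (real (2 ^ n) + real (2 ^ n)) * c\<^sup>2) / (4 * c)"
    unfolding trace by simp
  also have "\<dots> = 5 / 4"
    by (simp add: c_def field_simps power2_eq_square)
  finally show ?thesis
    by simp
qed

end
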